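(* Assume $\int_{(0,1)}\upsilon^p\lambda(d\upsilon)<\infty$ for some $p\in(1,2)$. Then for every $q\ge1$ there is a constant $\mathbf C_q$ such that for every $m\ge1$ and every $h\in(0,1)$, $$\int_{(0,q)^m}\mathbf 1_{\{\prod_{j=1}^m u_j\le h\,q^m\}}\prod_{i=1}^m u_i^2\,\lambda(du_i)\le h^{2-p}(\mathbf C_q)^m\sum_{\ell=1}^m\frac{(2-p)^{-\ell}}{(m-\ell)!}\big[\log(1/h)\big]^{m-\ell}.$$ In particular, for every $\varepsilon\in(0,2-p)$, $$\int_{(0,q)^m}\mathbf 1_{\{\prod_{j=1}^m u_j\le h\,q^m\}}\prod_{i=1}^m u_i^2\,\lambda(du_i)\le\frac{(\mathbf C_q/\varepsilon)^m}{2-p-\varepsilon}\,h^{2-p-\varepsilon}.$$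
   Context: $\lambda$ is a positive measure on $(0,\infty)$ with $\lambda([a,\infty))<\infty$ for every $a>0$. *)

theory Defs
  imports "HOL-Probability.Probability"
begin

definition small_prod_integral :: "real measure \<Rightarrow> real \<Rightarrow> nat \<Rightarrow> real \<Rightarrow> ennreal" where
  "small_prod_integral lam q m h =
     (\<integral>\<^sup>+ u. indicator {u. (\<forall>i\<in>{1..m}. u i \<in> {0<..<q}) \<and> (\<Prod>j\<in>{1..m}. u j) \<le> h * q ^ m} u
              * ennreal (\<Prod>i\<in>{1..m}. (u i)\<^sup>2)
        \<partial>(PiM {1..m} (\<lambda>_. lam)))"

end

theory Submission
  imports Defs
begin

text \<open>Write u_i^2 = u_i^p * u_i^(2-p). On the domain of integration the product of the
  u_i^(2-p) is at most (h q^m)^(2-p), and what remains factorises into m copies of the truncated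
  moment of lam on (0,q), which is finite by the moment hypothesis near 0 and the finite tail
  away from 0. This gives the bound h^(2-p) C_q^m, which already implies both estimates: the
  summand with l = m is at least 1, and h^(2-p) <= h^(2-p-eps) for h < 1.\<close>

lemma sigma_finite_measure_if_finite_tails:
  fixes lam :: "real measure"
  assumes sets_lam: "sets lam = sets borel"
    and supp: "emeasure lam {..0} = 0"
    and tail: "\<And>a. a > 0 \<Longrightarrow> emeasure lam {a..} < \<infinity>"
  shows "sigma_finite_measure lam"
proof
  let ?A = "insert {..0::real} (range (\<lambda>n::nat. {1 / real (Suc n)..}))"
  have "x \<in> \<Union>?A" for x :: real
  proof (cases "x \<le> 0")
    case False
    then obtain n where "inverse (real (Suc n)) < x"
      using reals_Archimedean by (metis not_le)
    then have "x \<in> {1 / real (Suc n)..}" by (simp add: inverse_eq_divide)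
    then show ?thesis by blast
  qed auto
  then have "\<Union>?A = UNIV" by blast
  moreover have "emeasure lam a \<noteq> \<infinity>" if "a \<in> ?A" for a
    using that
  proof
    assume "a \<in> range (\<lambda>n::nat. {1 / real (Suc n)..})"
    then obtain n :: nat where "a = {1 / real (Suc n)..}" by blast
    then show ?thesis using tail[of "1 / real (Suc n)"] by simp
  qed (use supp in simp)
  ultimately show "\<exists>A. countable A \<and> A \<subseteq> sets lam \<and> \<Union> A = space lam \<and> (\<forall>a\<in>A. emeasure lam a \<noteq> \<infinity>)"
    using sets_eq_imp_space_eq[OF sets_lam] unfolding sets_lam
    by (intro exI[of _ ?A]) auto
qed

lemma truncated_moment_finite:
  fixes lam :: "real measure" and p q :: real
  assumes sets_lam: "sets lam = sets borel"
    and tail: "emeasure lam {1..} < \<infinity>"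
    and moment: "(\<integral>\<^sup>+ v \<in> {0<..<1}. ennreal (v powr p) \<partial>lam) < \<infinity>"
    and "0 \<le> p"
  shows "(\<integral>\<^sup>+ v \<in> {0<..<q}. ennreal (v powr p) \<partial>lam) < \<infinity>"
proof -
  note [measurable_cong] = sets_lam
  have "ennreal (v powr p) * indicator {0<..<q} v
      \<le> ennreal (v powr p) * indicator {0<..<1} v + ennreal (q powr p) * indicator {1..} v" for v :: real
  proof (cases "0 < v \<and> v < q \<and> 1 \<le> v")
    case True
    then have "v powr p \<le> q powr p" using \<open>0 \<le> p\<close> by (intro powr_mono2) auto
    then show ?thesis using True by (simp add: indicator_def)
  qed (auto simp: indicator_def)
  then have "(\<integral>\<^sup>+ v \<in> {0<..<q}. ennreal (v powr p) \<partial>lam)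
      \<le> (\<integral>\<^sup>+ v. ennreal (v powr p) * indicator {0<..<1} v + ennreal (q powr p) * indicator {1..} v \<partial>lam)"
    by (intro nn_integral_mono)
  also have "\<dots> = (\<integral>\<^sup>+ v \<in> {0<..<1}. ennreal (v powr p) \<partial>lam) + ennreal (q powr p) * emeasure lam {1..}"
    by (subst nn_integral_add) (simp_all add: nn_integral_cmult_indicator sets_lam)
  also have "\<dots> < \<infinity>"
    using moment tail by (simp add: ennreal_mult_less_top)
  finally show ?thesis .
qed

lemma prod_square_le_powr:
  fixes u :: "'a \<Rightarrow> real" and c p :: real
  assumes pos: "\<And>i. i \<in> I \<Longrightarrow> 0 < u i"
    and le: "(\<Prod>i\<in>I. u i) \<le> c" and "p \<le> 2"
  shows "(\<Prod>i\<in>I. (u i)\<^sup>2) \<le> c powr (2 - p) * (\<Prod>i\<in>I. u i powr p)"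
proof -
  have "(\<Prod>i\<in>I. (u i)\<^sup>2) = (\<Prod>i\<in>I. u i powr p * u i powr (2 - p))"
    using pos by (intro prod.cong refl) (simp add: powr_add[symmetric] less_imp_le)
  also have "\<dots> = (\<Prod>i\<in>I. u i) powr (2 - p) * (\<Prod>i\<in>I. u i powr p)"
    using pos by (simp add: prod.distrib prod_powr_distrib less_imp_le mult.commute)
  also have "\<dots> \<le> c powr (2 - p) * (\<Prod>i\<in>I. u i powr p)"
    using pos le \<open>p \<le> 2\<close> by (intro mult_right_mono powr_mono2 prod_nonneg) (auto intro: less_imp_le)
  finally show ?thesis .
qed

lemma small_prod_integral_le_moment_power:
  fixes lam :: "real measure" and p q h :: real and m :: nat
  assumes sets_lam: "sets lam = sets borel" and "sigma_finite_measure lam"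
    and "0 < h" "0 < q" "p \<le> 2"
  shows "small_prod_integral lam q m h
    \<le> ennreal ((h * q ^ m) powr (2 - p)) * (\<integral>\<^sup>+ v \<in> {0<..<q}. ennreal (v powr p) \<partial>lam) ^ m"
proof -
  note [measurable_cong] = sets_lam
  interpret product_sigma_finite "\<lambda>_. lam"
    using \<open>sigma_finite_measure lam\<close> by (simp add: product_sigma_finite_def)
  define g where "g v = ennreal (v powr p) * indicator {0<..<q} v" for v :: real
  have [measurable]: "g \<in> borel_measurable borel" unfolding g_def by measurable
  then have g_measurable: "g \<in> borel_measurable lam" by measurable
  have "indicator {u. (\<forall>i\<in>{1..m}. u i \<in> {0<..<q}) \<and> (\<Prod>j\<in>{1..m}. u j) \<le> h * q ^ m} u
          * ennreal (\<Prod>i\<in>{1..m}. (u i)\<^sup>2)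
      \<le> ennreal ((h * q ^ m) powr (2 - p)) * (\<Prod>i\<in>{1..m}. g (u i))" for u
  proof (cases "(\<forall>i\<in>{1..m}. u i \<in> {0<..<q}) \<and> (\<Prod>j\<in>{1..m}. u j) \<le> h * q ^ m")
    case True
    then have "(\<Prod>i\<in>{1..m}. (u i)\<^sup>2) \<le> (h * q ^ m) powr (2 - p) * (\<Prod>i\<in>{1..m}. u i powr p)"
      using \<open>p \<le> 2\<close> by (intro prod_square_le_powr) auto
    moreover have "(\<Prod>i\<in>{1..m}. g (u i)) = ennreal (\<Prod>i\<in>{1..m}. u i powr p)"
      using True by (simp add: g_def prod_ennreal)
    ultimately show ?thesis
      using True by (simp add: ennreal_mult[symmetric] prod_nonneg)
  qed simp
  then have "small_prod_integral lam q m h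
      \<le> (\<integral>\<^sup>+ u. ennreal ((h * q ^ m) powr (2 - p)) * (\<Prod>i\<in>{1..m}. g (u i)) \<partial>PiM {1..m} (\<lambda>_. lam))"
    unfolding small_prod_integral_def by (intro nn_integral_mono)
  also have "\<dots> = ennreal ((h * q ^ m) powr (2 - p)) * (\<integral>\<^sup>+ u. (\<Prod>i\<in>{1..m}. g (u i)) \<partial>PiM {1..m} (\<lambda>_. lam))"
    using g_measurable by (intro nn_integral_cmult) measurable
  also have "(\<integral>\<^sup>+ u. (\<Prod>i\<in>{1..m}. g (u i)) \<partial>PiM {1..m} (\<lambda>_. lam)) = (\<Prod>i\<in>{1..m}. \<integral>\<^sup>+ v. g v \<partial>lam)"
    using product_nn_integral_prod[of "{1..m}" "\<lambda>_. g"] g_measurable by simp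
  also have "\<dots> = (\<integral>\<^sup>+ v \<in> {0<..<q}. ennreal (v powr p) \<partial>lam) ^ m"
    by (simp add: g_def)
  finally show ?thesis .
qed

lemma powr_mult_power:
  fixes h q a :: real
  assumes "0 \<le> h" "0 < q"
  shows "(h * q ^ m) powr a = h powr a * (q powr a) ^ m"
  using assms by (simp add: powr_mult powr_power powr_realpow[symmetric] powr_powr mult.commute)

lemma small_prod_integral_le_power:
  fixes lam :: "real measure" and p q :: real
  assumes sets_lam: "sets lam = sets borel"
    and supp: "emeasure lam {..0} = 0"
    and tail: "\<And>a. a > 0 \<Longrightarrow> emeasure lam {a..} < \<infinity>"
    and moment: "(\<integral>\<^sup>+ v \<in> {0<..<1}. ennreal (v powr p) \<partial>lam) < \<infinity>"
    and "0 \<le> p" "p \<le> 2" "0 < q"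
  shows "\<exists>C\<ge>0. \<forall>m h. 0 < h \<longrightarrow> small_prod_integral lam q m h \<le> ennreal (h powr (2 - p) * C ^ m)"
proof -
  have "(\<integral>\<^sup>+ v \<in> {0<..<q}. ennreal (v powr p) \<partial>lam) < \<infinity>"
    using truncated_moment_finite[OF sets_lam tail moment] \<open>0 \<le> p\<close> by simp
  moreover define K where "K = enn2real (\<integral>\<^sup>+ v \<in> {0<..<q}. ennreal (v powr p) \<partial>lam)"
  ultimately have K: "(\<integral>\<^sup>+ v \<in> {0<..<q}. ennreal (v powr p) \<partial>lam) = ennreal K" "0 \<le> K"
    by simp_all
  have "small_prod_integral lam q m h \<le> ennreal (h powr (2 - p) * (q powr (2 - p) * K) ^ m)"
    if "0 < h" for m h
  proof -
    have "small_prod_integral lam q m h \<le> ennreal ((h * q ^ m) powr (2 - p)) * ennreal K ^ m"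
      unfolding K(1)[symmetric] using that assms
      by (intro small_prod_integral_le_moment_power sigma_finite_measure_if_finite_tails) auto
    also have "\<dots> = ennreal (h powr (2 - p) * (q powr (2 - p) * K) ^ m)"
      using that \<open>0 < q\<close> K(2)
      by (simp add: powr_mult_power ennreal_power ennreal_mult' power_mult_distrib mult.assoc)
    finally show ?thesis .
  qed
  with K(2) show ?thesis by (intro exI[of _ "q powr (2 - p) * K"]) auto
qed

lemma one_le_sum_powr_ln:
  fixes a h :: real and m :: nat
  assumes "0 < a" "a \<le> 1" "1 \<le> m" "0 < h" "h < 1"
  shows "1 \<le> (\<Sum>l = 1..m. a powr (- real l) / fact (m - l) * (ln (1 / h)) ^ (m - l))"
proof -
  have "1 \<le> inverse (a ^ m)"
    using assms by (simp add: one_le_inverse_iff power_le_one)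
  also have "\<dots> = a powr (- real m) / fact (m - m) * (ln (1 / h)) ^ (m - m)"
    using \<open>0 < a\<close> by (simp add: powr_minus powr_realpow)
  also have "\<dots> \<le> (\<Sum>l = 1..m. a powr (- real l) / fact (m - l) * (ln (1 / h)) ^ (m - l))"
    using assms by (intro member_le_sum) auto
  finally show ?thesis .
qed

lemma powr_mult_power_le_smaller_exponent:
  fixes a e h C :: real and m :: nat
  assumes "0 < e" "e < a" "a \<le> 1" "0 < h" "h < 1" "0 \<le> C"
  shows "h powr a * C ^ m \<le> (C / e) ^ m / (a - e) * h powr (a - e)"
proof -
  have "h powr a \<le> h powr (a - e)"
    using assms by (intro powr_mono') auto
  moreover have "C ^ m \<le> (C / e) ^ m"
    using assms by (intro power_mono) (auto simp: le_divide_eq mult_left_le)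
  ultimately have "h powr a * C ^ m \<le> h powr (a - e) * (C / e) ^ m"
    using assms by (intro mult_mono) auto
  also have "\<dots> \<le> h powr (a - e) * (C / e) ^ m * (1 / (a - e))"
    using mult_left_mono[of 1 "1 / (a - e)" "h powr (a - e) * (C / e) ^ m"] assms
    by (simp add: le_divide_eq)
  finally show ?thesis by (simp add: mult_ac)
qed

lemma log_sum_and_epsilon_bounds_if_power_bound:
  fixes F :: "nat \<Rightarrow> real \<Rightarrow> ennreal" and p :: real
  assumes "\<exists>C\<ge>0. \<forall>m h. 0 < h \<longrightarrow> F m h \<le> ennreal (h powr (2 - p) * C ^ m)"
    and "1 < p" "p < 2"
  shows "\<exists>C. (\<forall>m::nat. \<forall>h::real. m \<ge> 1 \<and> 0 < h \<and> h < 1 \<longrightarrow>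
        F m h \<le> ennreal (h powr (2 - p) * C ^ m *
               (\<Sum>l = 1..m. (2 - p) powr (- real l) / fact (m - l) * (ln (1 / h)) ^ (m - l)))) \<and>
     (\<forall>m::nat. \<forall>h::real. \<forall>\<epsilon>::real. m \<ge> 1 \<and> 0 < h \<and> h < 1 \<and> 0 < \<epsilon> \<and> \<epsilon> < 2 - p \<longrightarrow>
        F m h \<le> ennreal ((C / \<epsilon>) ^ m / (2 - p - \<epsilon>) * h powr (2 - p - \<epsilon>)))"
proof -
  obtain C where "0 \<le> C" and bound: "\<And>m h. 0 < h \<Longrightarrow> F m h \<le> ennreal (h powr (2 - p) * C ^ m)"
    using assms(1) by blast
  show ?thesis
  proof (intro exI[of _ C] conjI allI impI)
    fix m :: nat and h :: real
    assume mh: "m \<ge> 1 \<and> 0 < h \<and> h < 1"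
    with assms(2,3) have sum_ge_1: "1 \<le> (\<Sum>l = 1..m. (2 - p) powr (- real l) / fact (m - l) * (ln (1 / h)) ^ (m - l))"
      by (intro one_le_sum_powr_ln) auto
    have "h powr (2 - p) * C ^ m
        \<le> h powr (2 - p) * C ^ m * (\<Sum>l = 1..m. (2 - p) powr (- real l) / fact (m - l) * (ln (1 / h)) ^ (m - l))"
      using mult_left_mono[OF sum_ge_1, of "h powr (2 - p) * C ^ m"] \<open>0 \<le> C\<close> by simp
    with bound[of h m] mh
    show "F m h \<le> ennreal (h powr (2 - p) * C ^ m *
        (\<Sum>l = 1..m. (2 - p) powr (- real l) / fact (m - l) * (ln (1 / h)) ^ (m - l)))"
      by (meson ennreal_leI order_trans)
  next
    fix m :: nat and h \<epsilon> :: real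
    assume mh: "m \<ge> 1 \<and> 0 < h \<and> h < 1 \<and> 0 < \<epsilon> \<and> \<epsilon> < 2 - p"
    with assms(2,3) \<open>0 \<le> C\<close>
    have "h powr (2 - p) * C ^ m \<le> (C / \<epsilon>) ^ m / (2 - p - \<epsilon>) * h powr (2 - p - \<epsilon>)"
      by (intro powr_mult_power_le_smaller_exponent) auto
    with bound[of h m] mh
    show "F m h \<le> ennreal ((C / \<epsilon>) ^ m / (2 - p - \<epsilon>) * h powr (2 - p - \<epsilon>))"
      by (meson ennreal_leI order_trans)
  qed
qed

theorem lemma4p8:
  fixes lam :: "real measure" and p :: real
  assumes sets_lam: "sets lam = sets borel"
    and supp: "emeasure lam {..0} = 0"
    and tail: "\<And>a. a > 0 \<Longrightarrow> emeasure lam {a..} < \<infinity>"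
    and p: "1 < p" "p < 2"
    and moment: "(\<integral>\<^sup>+ v \<in> {0<..<1}. ennreal (v powr p) \<partial>lam) < \<infinity>"
  shows "\<forall>q::real. q \<ge> 1 \<longrightarrow> (\<exists>C::real.
     (\<forall>m::nat. \<forall>h::real. m \<ge> 1 \<and> 0 < h \<and> h < 1 \<longrightarrow>
        small_prod_integral lam q m h
          \<le> ennreal (h powr (2 - p) * C ^ m *
               (\<Sum>l = 1..m. (2 - p) powr (- real l) / fact (m - l) * (ln (1 / h)) ^ (m - l)))) \<and>
     (\<forall>m::nat. \<forall>h::real. \<forall>\<epsilon>::real. m \<ge> 1 \<and> 0 < h \<and> h < 1 \<and> 0 < \<epsilon> \<and> \<epsilon> < 2 - p \<longrightarrow>
        small_prod_integral lam q m h
          \<le> ennreal ((C / \<epsilon>) ^ m / (2 - p - \<epsilon>) * h powr (2 - p - \<epsilon>))))"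
proof (intro allI impI log_sum_and_epsilon_bounds_if_power_bound p)
  fix q :: real
  assume "q \<ge> 1"
  with sets_lam supp tail moment p
  show "\<exists>C\<ge>0. \<forall>m h. 0 < h \<longrightarrow> small_prod_integral lam q m h \<le> ennreal (h powr (2 - p) * C ^ m)"
    by (intro small_prod_integral_le_power) auto
qed

end
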